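(* Let $p\in[1,\infty]$, $d\in\mathbb N$, $m_0:=d$, $m_1\le m_2\le\cdots$ positive integers, $\mathbf W_n\in\mathbb R^{m_n\times m_{n-1}}$ and $\mathbf b_n\in\mathbb R^{m_n}$ for $n\in\mathbb N$. If $\mathbf W_n=\mathbf I_{m_n,m_{n-1}}+\mathbf P_n$ for all $n\ge1$ with $\sum_{n=1}^\infty\|\mathbf P_n\|_p<\infty$, and $\sum_{n=1}^\infty\|\mathbf b_n\|_p<\infty$, then the ReLU networks $\mathcal N_n$ converge pointwise on $[0,1]^d$, i.e. for each $x\in[0,1]^d$ the sequence $\tilde{\mathcal N}_n(x)$ converges in $\ell^p$.
   Context: $\sigma(t)=\max(t,0)$ applied componentwise; $\mathcal N_n(x):=\big(\sigma(\mathbf W_n\cdot+\mathbf b_n)\circ\cdots\circ\sigma(\mathbf W_1\cdot+\mathbf b_1)\big)(x)\in\mathbb R^{m_n}$ for $x\in[0,1]^d$, and $\tilde{\mathcal N}_n(x)\in\ell^p$ is the sequence whose first $m_n$ entries are those of $\mathcal N_n(x)$ and whose remaining entries are $0$. $\|\cdot\|_p$ denotes the $\ell^p$ norm on vectors and the induced operator norm on matrices. For $m'\ge m$, $\mathbf I_{m',m}$ is the $m'\times m$ matrix whose top $m\times m$ block is the identity and whose remaining entries are zero. *)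

theory Defs
  imports "HOL-Analysis.Analysis"
begin

(* Vectors (finite or in l^p) are represented as sequences nat => real;
   a vector of R^m is a sequence vanishing from index m on.
   Matrices are nat => nat => real (entry (i,j) = row i, column j). *)

definition lp_norm :: "ereal \<Rightarrow> (nat \<Rightarrow> real) \<Rightarrow> real" where
  "lp_norm p x = (if p = \<infinity> then (SUP i. \<bar>x i\<bar>)
     else (\<Sum>i. \<bar>x i\<bar> powr real_of_ereal p) powr (1 / real_of_ereal p))"

definition in_lp :: "ereal \<Rightarrow> (nat \<Rightarrow> real) \<Rightarrow> bool" where
  "in_lp p x = (if p = \<infinity> then bounded (range x)
     else summable (\<lambda>i. \<bar>x i\<bar> powr real_of_ereal p))"

definition matvec :: "nat \<Rightarrow> nat \<Rightarrow> (nat \<Rightarrow> nat \<Rightarrow> real) \<Rightarrow> (nat \<Rightarrow> real) \<Rightarrow> (nat \<Rightarrow> real)" where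
  "matvec m k W y = (\<lambda>i. if i < m then (\<Sum>j<k. W i j * y j) else 0)"

definition op_norm :: "ereal \<Rightarrow> nat \<Rightarrow> nat \<Rightarrow> (nat \<Rightarrow> nat \<Rightarrow> real) \<Rightarrow> real" where
  "op_norm p m k W = Sup {lp_norm p (matvec m k W y) | y. (\<forall>i\<ge>k. y i = 0) \<and> lp_norm p y \<le> 1}"

definition trunc :: "nat \<Rightarrow> (nat \<Rightarrow> real) \<Rightarrow> (nat \<Rightarrow> real)" where
  "trunc m v = (\<lambda>i. if i < m then v i else 0)"

definition relu_layer :: "nat \<Rightarrow> nat \<Rightarrow> (nat \<Rightarrow> nat \<Rightarrow> real) \<Rightarrow> (nat \<Rightarrow> real) \<Rightarrow> (nat \<Rightarrow> real) \<Rightarrow> (nat \<Rightarrow> real)" where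
  "relu_layer m k W b y = (\<lambda>i. if i < m then max ((\<Sum>j<k. W i j * y j) + b i) 0 else 0)"

(* net m W b x n = \<tilde>N_n(x) (zero-padded); net ... 0 = x *)
fun net :: "(nat \<Rightarrow> nat) \<Rightarrow> (nat \<Rightarrow> nat \<Rightarrow> nat \<Rightarrow> real) \<Rightarrow> (nat \<Rightarrow> nat \<Rightarrow> real) \<Rightarrow> (nat \<Rightarrow> real) \<Rightarrow> nat \<Rightarrow> (nat \<Rightarrow> real)" where
  "net m W b x 0 = x"
| "net m W b x (Suc n) = relu_layer (m (Suc n)) (m n) (W (Suc n)) (b (Suc n)) (net m W b x n)"

end

theory Submission
  imports Defs
begin

(* Starting from a nonnegative input every iterate is nonnegative, and on nonnegative
   vectors the ReLU acts as the identity.  Since t \<mapsto> max t 0 is 1-Lipschitz, the n-th layer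
   therefore moves N_(n-1) by at most |P_n N_(n-1) + b_n|_p \<le> |P_n|_p |N_(n-1)|_p + |b_n|_p.
   A discrete Gronwall argument bounds |N_n|_p uniformly, so these increments are summable,
   and the N_n converge in l^p to their coordinatewise limit. *)

definition vanishes_from :: "nat \<Rightarrow> (nat \<Rightarrow> real) \<Rightarrow> bool" where
  "vanishes_from K z \<longleftrightarrow> (\<forall>i\<ge>K. z i = 0)"

lemma vanishes_from_mono: "vanishes_from K z \<Longrightarrow> K \<le> L \<Longrightarrow> vanishes_from L z"
  by (simp add: vanishes_from_def)

lemma vanishes_from_add:
  "vanishes_from K u \<Longrightarrow> vanishes_from L v \<Longrightarrow> vanishes_from (max K L) (\<lambda>i. u i + v i)"
  by (simp add: vanishes_from_def)

lemma vanishes_from_diff: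
  "vanishes_from K u \<Longrightarrow> vanishes_from L v \<Longrightarrow> vanishes_from (max K L) (\<lambda>i. u i - v i)"
  by (simp add: vanishes_from_def)

lemma vanishes_from_scale: "vanishes_from K z \<Longrightarrow> vanishes_from K (\<lambda>i. c * z i)"
  by (simp add: vanishes_from_def)

lemma vanishes_from_abs_le: "vanishes_from K v \<Longrightarrow> (\<And>i. \<bar>u i\<bar> \<le> \<bar>v i\<bar>) \<Longrightarrow> vanishes_from K u"
  unfolding vanishes_from_def by (metis abs_le_zero_iff abs_zero)

lemma vanishes_from_bdd_above: "vanishes_from K z \<Longrightarrow> bdd_above (range (\<lambda>i. \<bar>z i\<bar>))"
proof -
  assume "vanishes_from K z"
  then have "range (\<lambda>i. \<bar>z i\<bar>) \<subseteq> insert 0 ((\<lambda>i. \<bar>z i\<bar>) ` {..<K})"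
    by (auto simp: vanishes_from_def) (meson lessThan_iff not_le rev_image_eqI)
  then show ?thesis
    by (meson bdd_above_finite bdd_above_mono finite_imageI finite_insert finite_lessThan)
qed

lemma suminf_vanishes_from:
  "vanishes_from K z \<Longrightarrow> q > 0 \<Longrightarrow> (\<Sum>i. \<bar>z i\<bar> powr q) = (\<Sum>i<K. \<bar>z i\<bar> powr q)"
  by (rule suminf_finite) (auto simp: vanishes_from_def)

lemma summable_vanishes_from:
  "vanishes_from K z \<Longrightarrow> q > 0 \<Longrightarrow> summable (\<lambda>i. \<bar>z i\<bar> powr q)"
  by (rule summable_finite[of "{..<K}"]) (auto simp: vanishes_from_def)

definition lq_norm :: "real \<Rightarrow> (nat \<Rightarrow> real) \<Rightarrow> real" where
  "lq_norm q z = (\<Sum>i. \<bar>z i\<bar> powr q) powr (1/q)"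

lemma lq_norm_nonneg: "0 \<le> lq_norm q z"
  by (simp add: lq_norm_def)

lemma lq_norm_eq_sum:
  "vanishes_from K z \<Longrightarrow> q > 0 \<Longrightarrow> lq_norm q z = (\<Sum>i<K. \<bar>z i\<bar> powr q) powr (1/q)"
  by (simp add: lq_norm_def suminf_vanishes_from)

lemma lq_norm_powr:
  "vanishes_from K z \<Longrightarrow> q > 0 \<Longrightarrow> lq_norm q z powr q = (\<Sum>i<K. \<bar>z i\<bar> powr q)"
  by (simp add: lq_norm_eq_sum powr_powr sum_nonneg)

lemma abs_le_lq_norm:
  assumes "vanishes_from K z" "q > 0"
  shows "\<bar>z i\<bar> \<le> lq_norm q z"
proof (cases "i < K")
  case True
  have "\<bar>z i\<bar> = (\<bar>z i\<bar> powr q) powr (1/q)"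
    using assms by (simp add: powr_powr)
  also have "\<dots> \<le> (\<Sum>i<K. \<bar>z i\<bar> powr q) powr (1/q)"
    using True assms by (intro powr_mono2) (auto intro: member_le_sum)
  finally show ?thesis
    using lq_norm_eq_sum[OF assms] by simp
next
  case False
  then show ?thesis
    using assms by (simp add: vanishes_from_def lq_norm_nonneg)
qed

lemma lq_norm_mono:
  assumes "vanishes_from K v" "q > 0" "\<And>i. \<bar>u i\<bar> \<le> \<bar>v i\<bar>"
  shows "lq_norm q u \<le> lq_norm q v"
  unfolding lq_norm_eq_sum[OF vanishes_from_abs_le[OF assms(1,3)] assms(2)] lq_norm_eq_sum[OF assms(1,2)]
  using assms by (intro powr_mono2 sum_mono) (auto simp: sum_nonneg)

lemma lq_norm_scale:
  assumes "vanishes_from K z" "q > 0"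
  shows "lq_norm q (\<lambda>i. c * z i) = \<bar>c\<bar> * lq_norm q z"
proof -
  have "lq_norm q (\<lambda>i. c * z i) = (\<Sum>i<K. \<bar>c\<bar> powr q * \<bar>z i\<bar> powr q) powr (1/q)"
    unfolding lq_norm_eq_sum[OF vanishes_from_scale[OF assms(1)] assms(2)]
    by (simp add: abs_mult powr_mult)
  also have "\<dots> = (\<bar>c\<bar> powr q) powr (1/q) * (\<Sum>i<K. \<bar>z i\<bar> powr q) powr (1/q)"
    by (simp add: sum_distrib_left[symmetric] powr_mult sum_nonneg)
  also have "\<dots> = \<bar>c\<bar> * lq_norm q z"
    using assms by (simp add: powr_powr lq_norm_eq_sum[OF assms])
  finally show ?thesis .
qed

lemma convex_powr_nonneg:
  fixes q a b t :: real
  assumes q: "q \<ge> 1" and "a \<ge> 0" "b \<ge> 0" "0 \<le> t" "t \<le> 1"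
  shows "(t * a + (1 - t) * b) powr q \<le> t * a powr q + (1 - t) * b powr q"
proof -
  have powr_le_self: "s powr q \<le> s" if "0 \<le> s" "s \<le> 1" for s :: real
    using q that powr_mono'[of 1 q] by (metis powr_one order_trans order_refl)
  consider "a = 0" | "b = 0" | "a > 0" "b > 0"
    using assms by linarith
  then show ?thesis
  proof cases
    case 1
    have "((1-t) * b) powr q = (1-t) powr q * b powr q"
      using assms by (simp add: powr_mult)
    also have "\<dots> \<le> (1-t) * b powr q"
      using powr_le_self[of "1-t"] assms by (intro mult_right_mono) auto
    finally show ?thesis
      using 1 q by simp
  next
    case 2
    have "(t * a) powr q = t powr q * a powr q"
      using assms by (simp add: powr_mult)
    also have "\<dots> \<le> t * a powr q"
      using powr_le_self[of t] assms by (intro mult_right_mono) auto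
    finally show ?thesis
      using 2 q by simp
  next
    case 3
    then show ?thesis
      using convex_onD[OF powr_convex[OF q], of "1-t" a b] assms by auto
  qed
qed

text \<open>Minkowski's inequality, via convexity of \<open>s \<mapsto> s powr q\<close> applied to the convex
  combination \<open>\<bar>u i + v i\<bar> / (a + b) \<le> t (\<bar>u i\<bar> / a) + (1 - t) (\<bar>v i\<bar> / b)\<close>
  with \<open>a, b\<close> the norms of \<open>u, v\<close> and \<open>t = a / (a + b)\<close>.\<close>
lemma lq_norm_triangle:
  assumes u: "vanishes_from K u" and v: "vanishes_from K v" and q: "q \<ge> 1"
  shows "lq_norm q (\<lambda>i. u i + v i) \<le> lq_norm q u + lq_norm q v"
proof -
  have q0: "q > 0"
    using q by simp
  define a where "a = lq_norm q u"
  define b where "b = lq_norm q v"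
  consider "a = 0" | "b = 0" | "a > 0" "b > 0"
    using lq_norm_nonneg a_def b_def by (metis less_eq_real_def)
  then show ?thesis
  proof cases
    case 1
    then have "u i = 0" for i
      using abs_le_lq_norm[OF u q0, of i] a_def by simp
    then show ?thesis
      using 1 a_def by simp
  next
    case 2
    then have "v i = 0" for i
      using abs_le_lq_norm[OF v q0, of i] b_def by simp
    then show ?thesis
      using 2 b_def by simp
  next
    case 3
    define t where "t = a / (a + b)"
    have t: "0 \<le> t" "t \<le> 1" "1 - t = b / (a + b)"
      using 3 by (auto simp: t_def field_simps)
    have pointwise: "\<bar>u i + v i\<bar> powr q
        \<le> (a+b) powr q * (t * (\<bar>u i\<bar> powr q / a powr q) + (1-t) * (\<bar>v i\<bar> powr q / b powr q))" for i
    proof -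
      have "\<bar>u i\<bar> + \<bar>v i\<bar> = (a+b) * (t * (\<bar>u i\<bar>/a) + (1-t) * (\<bar>v i\<bar>/b))"
        using 3 t(3) by (simp add: t_def add_divide_distrib[symmetric])
      then have "\<bar>u i + v i\<bar> powr q \<le> ((a+b) * (t * (\<bar>u i\<bar>/a) + (1-t) * (\<bar>v i\<bar>/b))) powr q"
        using q0 by (metis abs_ge_zero abs_triangle_ineq powr_mono2 less_imp_le)
      also have "\<dots> = (a+b) powr q * (t * (\<bar>u i\<bar>/a) + (1-t) * (\<bar>v i\<bar>/b)) powr q"
        by (rule powr_mult)
      also have "\<dots> \<le> (a+b) powr q * (t * (\<bar>u i\<bar>/a) powr q + (1-t) * (\<bar>v i\<bar>/b) powr q)"
        using 3 t q by (intro mult_left_mono convex_powr_nonneg) auto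
      finally show ?thesis
        using 3 by (simp add: powr_divide)
    qed
    have "(\<Sum>i<K. \<bar>u i + v i\<bar> powr q)
        \<le> (\<Sum>i<K. (a+b) powr q * (t * (\<bar>u i\<bar> powr q / a powr q) + (1-t) * (\<bar>v i\<bar> powr q / b powr q)))"
      by (intro sum_mono pointwise)
    also have "\<dots> = (a+b) powr q * (t * ((\<Sum>i<K. \<bar>u i\<bar> powr q) / a powr q) + (1-t) * ((\<Sum>i<K. \<bar>v i\<bar> powr q) / b powr q))"
      by (simp add: sum_distrib_left sum_divide_distrib sum.distrib algebra_simps)
    also have "\<dots> = (a+b) powr q"
      using 3 lq_norm_powr[OF u q0, folded a_def, symmetric] lq_norm_powr[OF v q0, folded b_def, symmetric] by simp
    finally have "(\<Sum>i<K. \<bar>u i + v i\<bar> powr q) powr (1/q) \<le> ((a+b) powr q) powr (1/q)"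
      using q0 by (intro powr_mono2) (auto simp: sum_nonneg)
    then show ?thesis
      using 3 q0 unfolding lq_norm_eq_sum[OF vanishes_from_add[OF u v, simplified] q0] a_def b_def
      by (simp add: powr_powr)
  qed
qed

definition sup_norm :: "(nat \<Rightarrow> real) \<Rightarrow> real" where
  "sup_norm z = (SUP i. \<bar>z i\<bar>)"

lemma abs_le_sup_norm: "bdd_above (range (\<lambda>i. \<bar>z i\<bar>)) \<Longrightarrow> \<bar>z i\<bar> \<le> sup_norm z"
  unfolding sup_norm_def by (rule cSUP_upper) auto

lemma sup_norm_nonneg: "bdd_above (range (\<lambda>i. \<bar>z i\<bar>)) \<Longrightarrow> 0 \<le> sup_norm z"
  using abs_le_sup_norm[of z 0] by simp

lemma sup_norm_le: "(\<And>i. \<bar>z i\<bar> \<le> C) \<Longrightarrow> sup_norm z \<le> C"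
  unfolding sup_norm_def by (rule cSUP_least) auto

lemma sup_norm_mono:
  assumes "bdd_above (range (\<lambda>i. \<bar>v i\<bar>))" "\<And>i. \<bar>u i\<bar> \<le> \<bar>v i\<bar>"
  shows "sup_norm u \<le> sup_norm v"
proof (rule sup_norm_le)
  fix i
  show "\<bar>u i\<bar> \<le> sup_norm v"
    using assms(2)[of i] abs_le_sup_norm[OF assms(1), of i] by linarith
qed

lemma sup_norm_triangle:
  assumes "bdd_above (range (\<lambda>i. \<bar>u i\<bar>))" "bdd_above (range (\<lambda>i. \<bar>v i\<bar>))"
  shows "sup_norm (\<lambda>i. u i + v i) \<le> sup_norm u + sup_norm v"
proof (rule sup_norm_le)
  fix i
  show "\<bar>u i + v i\<bar> \<le> sup_norm u + sup_norm v"
    using abs_le_sup_norm[OF assms(1), of i] abs_le_sup_norm[OF assms(2), of i]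
      abs_triangle_ineq[of "u i" "v i"] by linarith
qed

lemma sup_norm_scale:
  assumes bdd: "bdd_above (range (\<lambda>i. \<bar>z i\<bar>))"
  shows "sup_norm (\<lambda>i. c * z i) = \<bar>c\<bar> * sup_norm z"
proof (cases "c = 0")
  case True
  then show ?thesis
    by (simp add: sup_norm_def)
next
  case False
  obtain M where M: "\<And>i. \<bar>z i\<bar> \<le> M"
    using bdd by (auto simp: bdd_above_def)
  have "bdd_above (range (\<lambda>i. \<bar>c * z i\<bar>))"
    using M by (auto simp: bdd_above_def abs_mult intro!: exI[of _ "\<bar>c\<bar> * M"] mult_left_mono)
  then have "\<bar>z i\<bar> \<le> sup_norm (\<lambda>i. c * z i) / \<bar>c\<bar>" for i
    using abs_le_sup_norm[of "\<lambda>i. c * z i" i] False by (simp add: abs_mult field_simps)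
  then have "sup_norm z \<le> sup_norm (\<lambda>i. c * z i) / \<bar>c\<bar>"
    by (rule sup_norm_le)
  moreover have "sup_norm (\<lambda>i. c * z i) \<le> \<bar>c\<bar> * sup_norm z"
    by (rule sup_norm_le) (use abs_le_sup_norm[OF bdd] in \<open>auto simp: abs_mult intro: mult_left_mono\<close>)
  ultimately show ?thesis
    using False by (simp add: field_simps)
qed

lemma lp_norm_cases:
  assumes "1 \<le> p"
  obtains "p = \<infinity>" "lp_norm p = sup_norm" "in_lp p = (\<lambda>z. bounded (range z))"
  | q where "q \<ge> 1" "p = ereal q" "lp_norm p = lq_norm q"
      "in_lp p = (\<lambda>z. summable (\<lambda>i. \<bar>z i\<bar> powr q))"
proof (cases p)
  case (real r)
  then show ?thesis
    using assms that(2)[of r] by (auto simp: fun_eq_iff lp_norm_def in_lp_def lq_norm_def)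
next
  case PInf
  then show ?thesis
    using that(1) by (auto simp: fun_eq_iff lp_norm_def in_lp_def sup_norm_def)
qed (use assms in simp)

lemma bounded_range_iff_bdd_above_abs:
  fixes z :: "nat \<Rightarrow> real"
  shows "bounded (range z) \<longleftrightarrow> bdd_above (range (\<lambda>i. \<bar>z i\<bar>))"
  by (auto simp: bounded_iff bdd_above_def)

lemma vanishes_from_matvec: "vanishes_from m (matvec m k P y)"
  by (simp add: vanishes_from_def matvec_def)

lemma vanishes_from_trunc: "vanishes_from m (trunc m b)"
  by (simp add: vanishes_from_def trunc_def)

lemma matvec_zero: "matvec m k P (\<lambda>i. 0) = (\<lambda>i. 0)"
  by (auto simp: matvec_def fun_eq_iff)

lemma matvec_scale: "matvec m k P (\<lambda>i. c * y i) = (\<lambda>i. c * matvec m k P y i)"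
  by (auto simp: matvec_def fun_eq_iff sum_distrib_left algebra_simps)

text \<open>\<open>t \<mapsto> max t 0\<close> is 1-Lipschitz and fixes \<open>y i \<ge> 0\<close>.\<close>
lemma relu_layer_minus_le:
  assumes "k \<le> m" "vanishes_from k y" "\<And>j. 0 \<le> y j"
    and W: "\<And>i j. i < m \<Longrightarrow> j < k \<Longrightarrow> W i j = (if i = j then 1 else 0) + P i j"
  shows "\<bar>relu_layer m k W b y i - y i\<bar> \<le> \<bar>matvec m k P y i + trunc m b i\<bar>"
proof (cases "i < m")
  case True
  have "(\<Sum>j<k. W i j * y j) = (\<Sum>j<k. (if i = j then y j else 0) + P i j * y j)"
    using W True by (intro sum.cong) (auto simp: algebra_simps)
  also have "\<dots> = y i + (\<Sum>j<k. P i j * y j)"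
    using assms(2) by (cases "i < k") (auto simp: sum.distrib vanishes_from_def)
  finally have "relu_layer m k W b y i = max (y i + (matvec m k P y i + trunc m b i)) 0"
    using True by (simp add: relu_layer_def matvec_def trunc_def add.assoc)
  then show ?thesis
    using assms(3)[of i] by (simp add: max_def abs_if)
next
  case False
  then show ?thesis
    using assms(1,2) by (simp add: relu_layer_def vanishes_from_def)
qed

context
  fixes p :: ereal
  assumes p: "1 \<le> p"
begin

lemma lp_norm_nonneg: "in_lp p z \<Longrightarrow> 0 \<le> lp_norm p z"
  by (cases rule: lp_norm_cases[OF p])
    (auto simp: lq_norm_nonneg sup_norm_nonneg bounded_range_iff_bdd_above_abs)

lemma in_lp_vanishes_from: "vanishes_from K z \<Longrightarrow> in_lp p z"
  by (cases rule: lp_norm_cases[OF p])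
    (auto simp: bounded_range_iff_bdd_above_abs vanishes_from_bdd_above summable_vanishes_from)

lemma abs_le_lp_norm: "vanishes_from K z \<Longrightarrow> \<bar>z i\<bar> \<le> lp_norm p z"
  by (cases rule: lp_norm_cases[OF p]) (auto simp: abs_le_lq_norm abs_le_sup_norm vanishes_from_bdd_above)

lemma lp_norm_mono: "vanishes_from K v \<Longrightarrow> (\<And>i. \<bar>u i\<bar> \<le> \<bar>v i\<bar>) \<Longrightarrow> lp_norm p u \<le> lp_norm p v"
  by (cases rule: lp_norm_cases[OF p]) (auto intro: lq_norm_mono sup_norm_mono vanishes_from_bdd_above)

lemma lp_norm_scale: "vanishes_from K z \<Longrightarrow> lp_norm p (\<lambda>i. c * z i) = \<bar>c\<bar> * lp_norm p z"
  by (cases rule: lp_norm_cases[OF p]) (auto simp: lq_norm_scale sup_norm_scale vanishes_from_bdd_above)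

lemma lp_norm_triangle:
  assumes "vanishes_from K u" "vanishes_from L v"
  shows "lp_norm p (\<lambda>i. u i + v i) \<le> lp_norm p u + lp_norm p v"
proof -
  have "vanishes_from (max K L) u" "vanishes_from (max K L) v"
    using assms by (auto intro: vanishes_from_mono)
  then show ?thesis
    by (cases rule: lp_norm_cases[OF p]) (auto intro: lq_norm_triangle sup_norm_triangle vanishes_from_bdd_above)
qed

lemma lp_norm_zero: "lp_norm p (\<lambda>i. 0) = 0"
  using lp_norm_scale[of 0 "\<lambda>i. 0" 0] by (simp add: vanishes_from_def)

lemma lp_norm_diff_commute:
  assumes "vanishes_from K u" "vanishes_from L v"
  shows "lp_norm p (\<lambda>i. u i - v i) = lp_norm p (\<lambda>i. v i - u i)"
  using lp_norm_mono[OF vanishes_from_diff[OF assms], of "\<lambda>i. v i - u i"]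
    lp_norm_mono[OF vanishes_from_diff[OF assms(2,1)], of "\<lambda>i. u i - v i"]
  by (simp add: abs_minus_commute)

lemma in_lp_diff:
  assumes "in_lp p u" "in_lp p v"
  shows "in_lp p (\<lambda>i. u i - v i)"
proof (cases rule: lp_norm_cases[OF p])
  case 1
  then show ?thesis
    using assms bounded_minus_comp[of u UNIV v] by simp
next
  case (2 q)
  have bound: "\<bar>u i - v i\<bar> powr q \<le> 2 powr q * (\<bar>u i\<bar> powr q + \<bar>v i\<bar> powr q)" for i
  proof -
    have "\<bar>u i - v i\<bar> powr q \<le> (2 * max \<bar>u i\<bar> \<bar>v i\<bar>) powr q"
      using 2 by (intro powr_mono2) auto
    also have "\<dots> = 2 powr q * max \<bar>u i\<bar> \<bar>v i\<bar> powr q"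
      by (rule powr_mult)
    also have "max \<bar>u i\<bar> \<bar>v i\<bar> powr q \<le> \<bar>u i\<bar> powr q + \<bar>v i\<bar> powr q"
      by (cases "\<bar>u i\<bar> \<le> \<bar>v i\<bar>") (auto simp: max_def)
    finally show ?thesis
      by simp
  qed
  have "summable (\<lambda>i. 2 powr q * (\<bar>u i\<bar> powr q + \<bar>v i\<bar> powr q))"
    using assms 2 by (intro summable_mult summable_add) auto
  then have "summable (\<lambda>i. \<bar>u i - v i\<bar> powr q)"
    by (rule summable_comparison_test'[where N=0]) (use bound in simp)
  then show ?thesis
    using 2 by simp
qed

text \<open>A Fatou argument: for finite \<open>p\<close> the bound passes to the limit through the finite
  partial sums \<open>\<Sum>i<n. \<bar>e i\<bar> powr q\<close>.\<close>
lemma in_lp_pointwise_limit: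
  assumes lim: "\<And>i. (\<lambda>j. g j i) \<longlonglongrightarrow> e i"
    and van: "\<And>j. vanishes_from (K j) (g j)"
    and bnd: "\<And>j. lp_norm p (g j) \<le> T"
  shows "in_lp p e \<and> lp_norm p e \<le> T"
proof (cases rule: lp_norm_cases[OF p])
  case 1
  have "\<bar>e i\<bar> \<le> T" for i
  proof (rule tendsto_le[OF _ tendsto_const])
    show "(\<lambda>j. \<bar>g j i\<bar>) \<longlonglongrightarrow> \<bar>e i\<bar>"
      using lim by (intro tendsto_intros)
    show "\<forall>\<^sub>F j in sequentially. \<bar>g j i\<bar> \<le> T"
      using abs_le_lp_norm[OF van] bnd by (meson always_eventually order_trans)
  qed simp
  then show ?thesis
    using 1 by (auto simp: bounded_iff intro: sup_norm_le)
next
  case (2 q)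
  have q: "q > 0"
    using 2 by simp
  have T: "0 \<le> T"
    using lp_norm_nonneg[OF in_lp_vanishes_from[OF van]] bnd by (meson order_trans)
  have partial: "(\<Sum>i<n. \<bar>e i\<bar> powr q) \<le> T powr q" for n
  proof (rule tendsto_le[OF _ tendsto_const])
    show "(\<lambda>j. \<Sum>i<n. \<bar>g j i\<bar> powr q) \<longlonglongrightarrow> (\<Sum>i<n. \<bar>e i\<bar> powr q)"
      using lim q by (intro tendsto_intros) auto
    show "\<forall>\<^sub>F j in sequentially. (\<Sum>i<n. \<bar>g j i\<bar> powr q) \<le> T powr q"
    proof (rule always_eventually, rule allI)
      fix j
      have "(\<Sum>i<n. \<bar>g j i\<bar> powr q) \<le> (\<Sum>i. \<bar>g j i\<bar> powr q)"
        using summable_vanishes_from[OF van q] by (intro sum_le_suminf) auto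
      also have "\<dots> = lq_norm q (g j) powr q"
        using q summable_vanishes_from[OF van q]
        by (simp add: lq_norm_def powr_powr suminf_nonneg)
      also have "\<dots> \<le> T powr q"
        using bnd[of j] 2 q by (intro powr_mono2) (auto simp: lq_norm_nonneg)
      finally show "(\<Sum>i<n. \<bar>g j i\<bar> powr q) \<le> T powr q" .
    qed
  qed simp
  have summable: "summable (\<lambda>i. \<bar>e i\<bar> powr q)"
  proof (rule bounded_imp_summable)
    show "(\<Sum>i\<le>n. \<bar>e i\<bar> powr q) \<le> T powr q" for n
      using partial[of "Suc n"] by (simp add: lessThan_Suc_atMost)
  qed simp
  have "(\<Sum>i. \<bar>e i\<bar> powr q) powr (1/q) \<le> (T powr q) powr (1/q)"
    using q summable partial by (intro powr_mono2 suminf_le_const) (auto intro: suminf_nonneg)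
  then have "lq_norm q e \<le> T"
    using q T by (simp add: lq_norm_def powr_powr)
  then show ?thesis
    using 2 summable by simp
qed

lemma lp_norm_telescope:
  assumes van: "\<And>n. vanishes_from (K n) (N n)"
  shows "lp_norm p (\<lambda>i. N n i - N (j + n) i) \<le> (\<Sum>k<j. lp_norm p (\<lambda>i. N (Suc (k + n)) i - N (k + n) i))"
proof (induction j)
  case 0
  then show ?case
    using lp_norm_zero by simp
next
  case (Suc j)
  have "(\<lambda>i. N n i - N (Suc j + n) i) = (\<lambda>i. (N n i - N (j + n) i) + (N (j + n) i - N (Suc (j + n)) i))"
    by simp
  then have "lp_norm p (\<lambda>i. N n i - N (Suc j + n) i)
      \<le> lp_norm p (\<lambda>i. N n i - N (j + n) i) + lp_norm p (\<lambda>i. N (j + n) i - N (Suc (j + n)) i)"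
    using lp_norm_triangle[OF vanishes_from_diff[OF van[of n] van[of "j + n"]]
        vanishes_from_diff[OF van[of "j + n"] van[of "Suc (j + n)"]]]
    by simp
  also have "lp_norm p (\<lambda>i. N (j + n) i - N (Suc (j + n)) i) = lp_norm p (\<lambda>i. N (Suc (j + n)) i - N (j + n) i)"
    by (rule lp_norm_diff_commute[OF van van])
  finally show ?case
    using Suc.IH by simp
qed

lemma lp_convergent_of_summable_increments:
  assumes van: "\<And>n. vanishes_from (K n) (N n)"
    and summable: "summable (\<lambda>n. lp_norm p (\<lambda>i. N (Suc n) i - N n i))"
  shows "\<exists>y. in_lp p y \<and> (\<lambda>n. lp_norm p (\<lambda>i. N n i - y i)) \<longlonglongrightarrow> 0"
proof -
  define \<delta> where "\<delta> n = lp_norm p (\<lambda>i. N (Suc n) i - N n i)" for n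
  note van_diff = vanishes_from_diff[OF van van]
  have \<delta>: "summable \<delta>" "0 \<le> \<delta> n" for n
    using summable lp_norm_nonneg[OF in_lp_vanishes_from[OF van_diff]] by (simp_all add: \<delta>_def[abs_def])
  define T where "T n = (\<Sum>k. \<delta> (k + n))" for n
  have "T = (\<lambda>n. suminf \<delta> - (\<Sum>k<n. \<delta> k))"
    using suminf_minus_initial_segment[OF \<delta>(1)] by (simp add: T_def fun_eq_iff)
  then have T: "T \<longlonglongrightarrow> 0"
    using tendsto_diff[OF tendsto_const summable_LIMSEQ[OF \<delta>(1)], of "suminf \<delta>"] by simp
  have coord: "summable (\<lambda>k. N (Suc k) i - N k i)" for i
    by (rule summable_comparison_test'[OF \<delta>(1), where N=0])
      (use abs_le_lp_norm[OF van_diff] in \<open>simp add: \<delta>_def\<close>)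
  define y where "y i = N 0 i + (\<Sum>k. N (Suc k) i - N k i)" for i
  have lim: "(\<lambda>j. N j i) \<longlonglongrightarrow> y i" for i
  proof -
    have "(\<lambda>j. N 0 i + (\<Sum>k<j. N (Suc k) i - N k i)) \<longlonglongrightarrow> y i"
      unfolding y_def by (intro tendsto_add tendsto_const summable_LIMSEQ coord)
    then show ?thesis
      by (simp add: sum_lessThan_telescope[of "\<lambda>k. N k i"])
  qed
  have tail: "in_lp p (\<lambda>i. N n i - y i) \<and> lp_norm p (\<lambda>i. N n i - y i) \<le> T n" for n
  proof (rule in_lp_pointwise_limit[OF _ van_diff])
    show "(\<lambda>j. N n i - N (j + n) i) \<longlonglongrightarrow> N n i - y i" for i
      using lim by (intro tendsto_diff tendsto_const LIMSEQ_ignore_initial_segment)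
    show "lp_norm p (\<lambda>i. N n i - N (j + n) i) \<le> T n" for j
      using lp_norm_telescope[OF van, where n=n and j=j] sum_le_suminf[OF summable_ignore_initial_segment[OF \<delta>(1)]] \<delta>(2)
      unfolding T_def \<delta>_def by (meson finite_lessThan order_trans)
  qed
  have "in_lp p (\<lambda>i. N 0 i - (N 0 i - y i))"
    by (rule in_lp_diff[OF in_lp_vanishes_from[OF van]]) (use tail[of 0] in simp)
  then have "in_lp p y"
    by simp
  moreover have "(\<lambda>n. lp_norm p (\<lambda>i. N n i - y i)) \<longlonglongrightarrow> 0"
    using tail lp_norm_nonneg by (intro tendsto_sandwich[OF _ _ tendsto_const T]) auto
  ultimately show ?thesis
    by auto
qed

lemma bdd_above_op_norm_set:
  "bdd_above {lp_norm p (matvec m k P y) | y. (\<forall>i\<ge>k. y i = 0) \<and> lp_norm p y \<le> 1}"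
proof -
  define w where "w i = (if i < m then \<Sum>j<k. \<bar>P i j\<bar> else 0)" for i
  have "lp_norm p (matvec m k P y) \<le> lp_norm p w" if "vanishes_from k y" "lp_norm p y \<le> 1" for y
  proof (rule lp_norm_mono)
    show "vanishes_from m w"
      by (simp add: vanishes_from_def w_def)
    have "\<bar>y j\<bar> \<le> 1" for j
      using abs_le_lp_norm[OF that(1), of j] that(2) by linarith
    then have "\<bar>\<Sum>j<k. P i j * y j\<bar> \<le> (\<Sum>j<k. \<bar>P i j\<bar>)" for i
      by (intro sum_abs[THEN order_trans] sum_mono) (auto simp: abs_mult intro: mult_left_le)
    then show "\<bar>matvec m k P y i\<bar> \<le> \<bar>w i\<bar>" for i
      by (simp add: matvec_def w_def sum_nonneg)
  qed
  then show ?thesis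
    unfolding bdd_above_def vanishes_from_def by blast
qed

lemma op_norm_nonneg: "0 \<le> op_norm p m k P"
  unfolding op_norm_def
proof (rule cSup_upper2[OF _ _ bdd_above_op_norm_set])
  show "lp_norm p (matvec m k P (\<lambda>i. 0)) \<in> {lp_norm p (matvec m k P y) | y. (\<forall>i\<ge>k. y i = 0) \<and> lp_norm p y \<le> 1}"
    using lp_norm_zero by auto
  show "0 \<le> lp_norm p (matvec m k P (\<lambda>i. 0))"
    using lp_norm_zero by (simp add: matvec_zero)
qed

lemma lp_norm_matvec_le:
  assumes v: "vanishes_from k v"
  shows "lp_norm p (matvec m k P v) \<le> op_norm p m k P * lp_norm p v"
proof (cases "lp_norm p v = 0")
  case True
  then have "v = (\<lambda>i. 0)"
    using abs_le_lp_norm[OF v] by (auto simp: fun_eq_iff)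
  then show ?thesis
    using True lp_norm_zero by (simp add: matvec_zero)
next
  case False
  define c where "c = lp_norm p v"
  have c: "c > 0"
    using False lp_norm_nonneg[OF in_lp_vanishes_from[OF v]] c_def by simp
  define y where "y = (\<lambda>i. v i / c)"
  have "vanishes_from k y" "lp_norm p y = 1"
    using v c lp_norm_scale[OF v, of "1/c"] by (simp_all add: y_def c_def vanishes_from_def)
  then have "lp_norm p (matvec m k P y) \<le> op_norm p m k P"
    unfolding op_norm_def by (intro cSup_upper[OF _ bdd_above_op_norm_set]) (auto simp: vanishes_from_def)
  moreover have "matvec m k P v = (\<lambda>i. c * matvec m k P y i)"
    using c by (simp add: matvec_scale[symmetric] y_def)
  ultimately show ?thesis
    using c lp_norm_scale[OF vanishes_from_matvec, of c m k P y] by (simp add: c_def mult.commute)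
qed

lemma lp_norm_relu_layer_minus_le:
  assumes "k \<le> m" "vanishes_from k y" "\<And>j. 0 \<le> y j"
    and "\<And>i j. i < m \<Longrightarrow> j < k \<Longrightarrow> W i j = (if i = j then 1 else 0) + P i j"
  shows "lp_norm p (\<lambda>i. relu_layer m k W b y i - y i) \<le> op_norm p m k P * lp_norm p y + lp_norm p (trunc m b)"
proof -
  have "lp_norm p (\<lambda>i. relu_layer m k W b y i - y i) \<le> lp_norm p (\<lambda>i. matvec m k P y i + trunc m b i)"
    by (intro lp_norm_mono[OF vanishes_from_add[OF vanishes_from_matvec vanishes_from_trunc]] relu_layer_minus_le assms)
  also have "\<dots> \<le> lp_norm p (matvec m k P y) + lp_norm p (trunc m b)"
    by (rule lp_norm_triangle[OF vanishes_from_matvec vanishes_from_trunc])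
  also have "\<dots> \<le> op_norm p m k P * lp_norm p y + lp_norm p (trunc m b)"
    using lp_norm_matvec_le[OF assms(2)] by simp
  finally show ?thesis .
qed

end

lemma bounded_of_summable_growth:
  fixes u a c :: "nat \<Rightarrow> real"
  assumes rec: "\<And>n. u (Suc n) \<le> (1 + a n) * u n + c n"
    and a: "\<And>n. 0 \<le> a n" "summable a" and c: "\<And>n. 0 \<le> c n" "summable c" and "0 \<le> u 0"
  shows "u n \<le> exp (suminf a) * (u 0 + suminf c)"
proof -
  have partial: "u n \<le> exp (\<Sum>k<n. a k) * (u 0 + (\<Sum>k<n. c k))" for n
  proof (induction n)
    case (Suc n)
    define S where "S = (\<Sum>k<n. a k)"
    define C where "C = u 0 + (\<Sum>k<n. c k)"
    have "0 \<le> exp S * C"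
      using assms c by (simp add: C_def sum_nonneg)
    have "(1 + a n) * u n \<le> (1 + a n) * (exp S * C)"
      using Suc.IH a(1)[of n] by (intro mult_left_mono) (simp_all add: S_def C_def)
    then have step: "u (Suc n) \<le> (1 + a n) * (exp S * C) + c n"
      using rec[of n] by linarith
    have "1 \<le> exp (S + a n)"
      using a(1) by (simp add: S_def sum_nonneg)
    then have "c n \<le> exp (S + a n) * c n"
      using mult_right_mono[OF _ c(1)[of n]] by fastforce
    moreover have "(1 + a n) * (exp S * C) \<le> exp (a n) * (exp S * C)"
      using exp_ge_add_one_self[of "a n"] \<open>0 \<le> exp S * C\<close> by (rule mult_right_mono)
    ultimately have "u (Suc n) \<le> exp (a n) * (exp S * C) + exp (S + a n) * c n"
      using step by linarith
    then show ?case
      by (simp add: S_def C_def exp_add algebra_simps)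
  qed simp
  also have "exp (\<Sum>k<n. a k) * (u 0 + (\<Sum>k<n. c k)) \<le> exp (suminf a) * (u 0 + suminf c)"
    using assms sum_le_suminf[OF a(2)] sum_le_suminf[OF c(2)]
    by (intro mult_mono add_left_mono) (auto simp: sum_nonneg)
  finally show ?thesis .
qed

lemma summable_of_linear_growth:
  fixes u \<delta> a c :: "nat \<Rightarrow> real"
  assumes \<delta>: "\<And>n. \<delta> n \<le> a n * u n + c n" "\<And>n. 0 \<le> \<delta> n"
    and u: "\<And>n. u (Suc n) \<le> u n + \<delta> n" "0 \<le> u 0"
    and a: "\<And>n. 0 \<le> a n" "summable a" and c: "\<And>n. 0 \<le> c n" "summable c"
  shows "summable \<delta>"
proof -
  define M where "M = exp (suminf a) * (u 0 + suminf c)"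
  have "u (Suc n) \<le> (1 + a n) * u n + c n" for n
    using u(1)[of n] \<delta>(1)[of n] by (simp add: distrib_right)
  then have M: "u n \<le> M" for n
    unfolding M_def using a c u(2) by (rule bounded_of_summable_growth)
  show ?thesis
  proof (rule summable_comparison_test'[where N=0])
    show "summable (\<lambda>n. a n * M + c n)"
      using a c by (intro summable_add summable_mult2)
    show "norm (\<delta> n) \<le> a n * M + c n" for n
      using \<delta>(1,2)[of n] mult_left_mono[OF M[of n] a(1)[of n]] by simp
  qed
qed

lemma vanishes_from_net: "vanishes_from (m 0) x \<Longrightarrow> vanishes_from (m n) (net m W b x n)"
  by (cases n) (auto simp: vanishes_from_def relu_layer_def)

lemma net_nonneg: "(\<And>i. 0 \<le> x i) \<Longrightarrow> 0 \<le> net m W b x n i"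
  by (cases n) (auto simp: relu_layer_def)

lemma lp_norm_net_increment_le:
  assumes "1 \<le> p" "vanishes_from (m 0) x" "\<And>i. 0 \<le> x i" "m n \<le> m (Suc n)"
    and "\<And>i j. i < m (Suc n) \<Longrightarrow> j < m n \<Longrightarrow> W (Suc n) i j = (if i = j then 1 else 0) + P (Suc n) i j"
  shows "lp_norm p (\<lambda>i. net m W b x (Suc n) i - net m W b x n i)
    \<le> op_norm p (m (Suc n)) (m n) (P (Suc n)) * lp_norm p (net m W b x n)
      + lp_norm p (trunc (m (Suc n)) (b (Suc n)))"
  unfolding net.simps(2)
  by (intro lp_norm_relu_layer_minus_le vanishes_from_net net_nonneg assms)

theorem theorem5p2:
  fixes p :: ereal and d :: nat and m :: "nat \<Rightarrow> nat"
    and W P :: "nat \<Rightarrow> nat \<Rightarrow> nat \<Rightarrow> real" and b :: "nat \<Rightarrow> nat \<Rightarrow> real"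
    and x :: "nat \<Rightarrow> real"
  assumes p: "1 \<le> p"
    and m0: "m 0 = d"
    and mpos: "\<And>n. n \<ge> 1 \<Longrightarrow> 0 < m n"
    and mmono: "\<And>n. n \<ge> 1 \<Longrightarrow> m n \<le> m (Suc n)"
    and WP: "\<And>n i j. n \<ge> 1 \<Longrightarrow> i < m n \<Longrightarrow> j < m (n - 1) \<Longrightarrow>
               W n i j = (if i = j then 1 else 0) + P n i j"
    and Psum: "summable (\<lambda>n. op_norm p (m (Suc n)) (m n) (P (Suc n)))"
    and bsum: "summable (\<lambda>n. lp_norm p (trunc (m (Suc n)) (b (Suc n))))"
    and x01: "\<And>i. i < d \<Longrightarrow> 0 \<le> x i \<and> x i \<le> 1"
    and x0: "\<And>i. i \<ge> d \<Longrightarrow> x i = 0"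
  shows "\<exists>y. in_lp p y \<and> (\<lambda>n. lp_norm p (\<lambda>i. net m W b x n i - y i)) \<longlonglongrightarrow> 0"
proof -
  define N where "N = net m W b x"
  define a where "a n = op_norm p (m (Suc n)) (m n) (P (Suc n))" for n
  define \<beta> where "\<beta> n = lp_norm p (trunc (m (Suc n)) (b (Suc n)))" for n
  define \<delta> where "\<delta> n = lp_norm p (\<lambda>i. N (Suc n) i - N n i)" for n
  have x_van: "vanishes_from (m 0) x"
    by (simp add: vanishes_from_def m0 x0)
  have x_nonneg: "0 \<le> x i" for i
    by (cases "i < d") (simp_all add: x01 x0)
  have van: "vanishes_from (m n) (N n)" for n
    unfolding N_def by (rule vanishes_from_net) (rule x_van)
  have \<delta>_le: "\<delta> (Suc n) \<le> a (Suc n) * lp_norm p (N (Suc n)) + \<beta> (Suc n)" for n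
    unfolding \<delta>_def a_def \<beta>_def N_def
    using mmono[of "Suc n"] WP[of "Suc (Suc n)"] by (intro lp_norm_net_increment_le p x_van x_nonneg) auto
  have growth: "lp_norm p (N (Suc n)) \<le> lp_norm p (N n) + \<delta> n" for n
    using lp_norm_triangle[OF p van[of n] vanishes_from_diff[OF van[of "Suc n"] van[of n]]]
    by (simp add: \<delta>_def)
  have "summable (\<lambda>n. \<delta> (Suc n))"
    by (rule summable_of_linear_growth[where u="\<lambda>n. lp_norm p (N (Suc n))"
          and a="\<lambda>n. a (Suc n)" and c="\<lambda>n. \<beta> (Suc n)"])
      (use \<delta>_le growth summable_Suc_iff[THEN iffD2, OF Psum] summable_Suc_iff[THEN iffD2, OF bsum]
        op_norm_nonneg[OF p] lp_norm_nonneg[OF p in_lp_vanishes_from[OF p van]]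
        lp_norm_nonneg[OF p in_lp_vanishes_from[OF p vanishes_from_trunc]]
        lp_norm_nonneg[OF p in_lp_vanishes_from[OF p vanishes_from_diff[OF van van]]]
        in \<open>simp_all add: summable_Suc_iff a_def \<beta>_def \<delta>_def\<close>)
  then have "summable \<delta>"
    by (simp only: summable_Suc_iff)
  then show ?thesis
    unfolding \<delta>_def[abs_def] N_def
    by (rule lp_convergent_of_summable_increments[OF p van[unfolded N_def]])
qed

end
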